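(* Let $G$ be a finite group and let $H\leq G$. Consider the square matrix \[ \bigl( |P\backslash G /Q| \bigr)_{P,Q}, \] whose rows and columns are indexed by the $G$-conjugacy classes of subgroups of $H$ (with $P,Q$ representatives of these classes), and whose $(P,Q)$-entry is the number of $(P,Q)$-double cosets $PgQ$, $g\in G$. Then the rank of this matrix (over $\mathbb{Q}$) is equal to the number of $G$-conjugacy classes of cyclic subgroups of $H$.
   Context: Two subgroups $P,Q\leq H$ are $G$-conjugate if $Q=gPg^{-1}$ for some $g\in G$. The number $|P\backslash G/Q|$ depends only on the $G$-conjugacy classes of $P$ and $Q$. *)

theory Defs
  imports "HOL-Algebra.Algebra" "Jordan_Normal_Form.DL_Rank"
begin

definition subgroups_of :: "('a, 'b) monoid_scheme \<Rightarrow> 'a set \<Rightarrow> 'a set set" where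
  "subgroups_of G H = {P. subgroup P G \<and> P \<subseteq> H}"

definition G_conjugate :: "('a, 'b) monoid_scheme \<Rightarrow> 'a set \<Rightarrow> 'a set \<Rightarrow> bool" where
  "G_conjugate G P Q \<longleftrightarrow> (\<exists>g\<in>carrier G. Q = (g <#\<^bsub>G\<^esub> P) #>\<^bsub>G\<^esub> inv\<^bsub>G\<^esub> g)"

definition conj_classes_of_subgroups :: "('a, 'b) monoid_scheme \<Rightarrow> 'a set \<Rightarrow> 'a set set set" where
  "conj_classes_of_subgroups G H =
     (\<lambda>P. {Q \<in> subgroups_of G H. G_conjugate G P Q}) ` subgroups_of G H"

definition class_rep :: "'a set set \<Rightarrow> 'a set" where
  "class_rep C = (SOME P. P \<in> C)"

definition double_cosets :: "('a, 'b) monoid_scheme \<Rightarrow> 'a set \<Rightarrow> 'a set \<Rightarrow> 'a set set" where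
  "double_cosets G P Q = {P <#>\<^bsub>G\<^esub> (g <#\<^bsub>G\<^esub> Q) | g. g \<in> carrier G}"

definition cyclic_subgroup :: "('a, 'b) monoid_scheme \<Rightarrow> 'a set \<Rightarrow> bool" where
  "cyclic_subgroup G P \<longleftrightarrow> (\<exists>g\<in>carrier G. P = generate G {g})"

definition conj_classes_of_cyclic_subgroups :: "('a, 'b) monoid_scheme \<Rightarrow> 'a set \<Rightarrow> 'a set set set" where
  "conj_classes_of_cyclic_subgroups G H =
     {C \<in> conj_classes_of_subgroups G H. \<exists>P\<in>C. cyclic_subgroup G P}"

text \<open>The double coset matrix, w.r.t. an enumeration e of the classes by 0..n-1.\<close>
definition double_coset_matrix ::
  "('a, 'b) monoid_scheme \<Rightarrow> (nat \<Rightarrow> 'a set set) \<Rightarrow> nat \<Rightarrow> rat mat" where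
  "double_coset_matrix G e n =
     mat n n (\<lambda>(i, j). of_nat (card (double_cosets G (class_rep (e i)) (class_rep (e j)))))"

end

theory Submission
  imports Defs "Jordan_Normal_Form.DL_Rank_Submatrix"
begin

text \<open>Burnside's lemma for the action \<open>(p, q) \<cdot> g = p g q\<inverse>\<close> of \<open>P \<times> Q\<close> on \<open>G\<close>, whose orbits are
  the double cosets, gives \<open>|P\G/Q| |P| |Q| = \<Sum>\<^sub>p\<^sub>\<in>\<^sub>P #{g. g\<inverse> p g \<in> Q}\<close>. The summand depends only
  on the \<open>G\<close>-class \<open>c\<close> of the cyclic subgroup \<open>\<langle>p\<rangle>\<close>: it is \<open>#{g. g\<inverse> Z\<^sub>c g \<subseteq> Q}\<close> for the
  representative \<open>Z\<^sub>c\<close> of \<open>c\<close>. Hence the matrix is \<open>\<Sum>\<^sub>c f\<^sub>c(P) g\<^sub>c(Q)\<close>, summed over the classes of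
  cyclic subgroups of \<open>H\<close>, with \<open>f\<^sub>c(P) = #{p \<in> P. \<langle>p\<rangle> \<in> c} / |P|\<close> and
  \<open>g\<^sub>c(Q) = #{g. g\<inverse> Z\<^sub>c g \<subseteq> Q} / |Q|\<close>, so its rank is at most their number. Conversely, on the
  cyclic classes both \<open>f\<close> and \<open>g\<close> have nonzero diagonal and \<open>f\<^sub>c(Z\<^sub>d) \<noteq> 0\<close> or \<open>g\<^sub>c(Z\<^sub>d) \<noteq> 0\<close> for
  \<open>c \<noteq> d\<close> forces \<open>|Z\<^sub>c| < |Z\<^sub>d|\<close>: both are triangular once classes are ordered by size, so the
  minor on the cyclic rows and columns is invertible.\<close>

lemma bij_betw_pick:
  assumes "finite S"
  shows "bij_betw (pick S) {..<card S} S"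
proof -
  have inj: "inj_on (pick S) {..<card S}"
    by (rule inj_onI) (metis lessThan_iff nat_neq_iff pick_mono)
  have "pick S ` {..<card S} \<subseteq> S" using pick_in_set by auto
  moreover have "card (pick S ` {..<card S}) = card S" using card_image[OF inj] by simp
  ultimately show ?thesis using card_subset_eq[OF assms] inj by (simp add: bij_betw_def)
qed

lemma det_nonzero_if_weight_triangular:
  fixes A :: "'a::idom mat" and w :: "nat \<Rightarrow> 'b::linorder"
  assumes A: "A \<in> carrier_mat k k"
    and diag: "\<And>i. i < k \<Longrightarrow> A $$ (i, i) \<noteq> 0"
    and triangular: "\<And>i j. i < k \<Longrightarrow> j < k \<Longrightarrow> i \<noteq> j \<Longrightarrow> A $$ (i, j) \<noteq> 0 \<Longrightarrow> w i < w j"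
  shows "det A \<noteq> 0"
proof
  assume "det A = 0"
  then obtain v where v: "v \<in> carrier_vec k" "v \<noteq> 0\<^sub>v k" "A *\<^sub>v v = 0\<^sub>v k"
    using det_0_iff_vec_prod_zero[OF A] by blast
  define Z where "Z = {j. j < k \<and> v $ j \<noteq> 0}"
  have "finite Z" "Z \<noteq> {}" using v(1,2) by (auto simp: Z_def)
  then have "Max (w ` Z) \<in> w ` Z" by (intro Max_in) auto
  then obtain i where i: "i \<in> Z" and "w i = Max (w ` Z)" by (metis imageE)
  have max: "w j \<le> w i" if "j \<in> Z" for j
    unfolding \<open>w i = Max (w ` Z)\<close> using that \<open>finite Z\<close> by (intro Max_ge) auto
  have "0 = (A *\<^sub>v v) $ i" using v(3) i by (simp add: Z_def)
  also have "\<dots> = (\<Sum>j<k. A $$ (i, j) * v $ j)"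
    using A v(1) i by (simp add: Z_def scalar_prod_def lessThan_atLeast0)
  also have "\<dots> = A $$ (i, i) * v $ i + (\<Sum>j\<in>{..<k} - {i}. A $$ (i, j) * v $ j)"
    using i by (intro sum.remove) (auto simp: Z_def)
  also have "(\<Sum>j\<in>{..<k} - {i}. A $$ (i, j) * v $ j) = 0"
  proof (rule sum.neutral, intro ballI)
    fix j assume j: "j \<in> {..<k} - {i}"
    show "A $$ (i, j) * v $ j = 0"
    proof (cases "j \<in> Z")
      case True
      then have "\<not> w i < w j" using max by (simp add: not_less)
      then show ?thesis using triangular[of i j] True i j by (auto simp: Z_def)
    qed (use j in \<open>simp add: Z_def\<close>)
  qed
  finally show False using diag[of i] i by (simp add: Z_def)
qed

lemma rank_sum_product_matrices_le:
  fixes f g :: "'c \<Rightarrow> nat \<Rightarrow> 'a::field"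
  assumes "finite T"
  shows "vec_space.rank n (mat n n (\<lambda>(i, j). \<Sum>c\<in>T. f c i * g c j)) \<le> card T"
  using assms
proof (induction T rule: finite_induct)
  case empty
  interpret vec_space "TYPE('a)" n .
  have zero: "mat n n (\<lambda>(i, j). \<Sum>c\<in>{}. f c i * g c j) = 0\<^sub>m n n" by (rule eq_matI) auto
  show ?case unfolding zero using rank_0I by simp
next
  case (insert c T)
  interpret vec_space "TYPE('a)" n .
  let ?R = "mat n n (\<lambda>(i, j). f c i * g c j)" and ?S = "mat n n (\<lambda>(i, j). \<Sum>c\<in>T. f c i * g c j)"
  have "mat n n (\<lambda>(i, j). \<Sum>c\<in>insert c T. f c i * g c j) = ?R + ?S"
    by (rule eq_matI) (use insert in auto)
  moreover have "rank ?R \<le> 1"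
    by (rule rank_le_1_product_entries[of _ n "f c" "g c"]) auto
  moreover have "rank (?R + ?S) \<le> rank ?R + rank ?S"
    by (rule rank_subadditive) auto
  ultimately show ?case using insert by simp
qed

lemma submatrix_sum_product_matrices:
  fixes f g :: "nat \<Rightarrow> nat \<Rightarrow> 'a::comm_semiring_0"
  assumes J: "J \<subseteq> {..<n}"
  shows "submatrix (mat n n (\<lambda>(i, j). \<Sum>c\<in>J. f c i * g c j)) J J
       = (mat (card J) (card J) (\<lambda>(s, t). f (pick J s) (pick J t)))\<^sup>T
         * mat (card J) (card J) (\<lambda>(s, t). g (pick J s) (pick J t))"
    (is "submatrix ?M J J = ?A\<^sup>T * ?B")
proof -
  have pick: "bij_betw (pick J) {..<card J} J" using J finite_subset by (blast intro: bij_betw_pick)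
  have JJ: "{j. j < n \<and> j \<in> J} = J" using J by auto
  show ?thesis
  proof (rule eq_matI)
    fix s t assume "s < dim_row (?A\<^sup>T * ?B)" "t < dim_col (?A\<^sup>T * ?B)"
    then have st: "s < card J" "t < card J" by simp_all
    then have "pick J s < n" "pick J t < n" using pick J by (auto simp: bij_betw_def)
    have "(?A\<^sup>T * ?B) $$ (s, t) = (\<Sum>r<card J. f (pick J r) (pick J s) * g (pick J r) (pick J t))"
      using st by (simp add: scalar_prod_def lessThan_atLeast0)
    also have "\<dots> = (\<Sum>c\<in>J. f c (pick J s) * g c (pick J t))"
      by (rule sum.reindex_bij_betw[OF pick])
    finally show "submatrix ?M J J $$ (s, t) = (?A\<^sup>T * ?B) $$ (s, t)"
      using st \<open>pick J s < n\<close> \<open>pick J t < n\<close> by (simp add: submatrix_index JJ)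
  qed (simp_all add: submatrix_def JJ)
qed

lemma rank_sum_weight_triangular_products:
  fixes f g :: "nat \<Rightarrow> nat \<Rightarrow> 'a::field" and w :: "nat \<Rightarrow> 'b::linorder"
  assumes J: "J \<subseteq> {..<n}"
    and f_diag: "\<And>c. c \<in> J \<Longrightarrow> f c c \<noteq> 0"
    and f_triangular: "\<And>c d. c \<in> J \<Longrightarrow> d \<in> J \<Longrightarrow> c \<noteq> d \<Longrightarrow> f c d \<noteq> 0 \<Longrightarrow> w c < w d"
    and g_diag: "\<And>c. c \<in> J \<Longrightarrow> g c c \<noteq> 0"
    and g_triangular: "\<And>c d. c \<in> J \<Longrightarrow> d \<in> J \<Longrightarrow> c \<noteq> d \<Longrightarrow> g c d \<noteq> 0 \<Longrightarrow> w c < w d"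
  shows "vec_space.rank n (mat n n (\<lambda>(i, j). \<Sum>c\<in>J. f c i * g c j)) = card J"
proof (rule antisym)
  let ?M = "mat n n (\<lambda>(i, j). \<Sum>c\<in>J. f c i * g c j)"
  have "finite J" using J finite_subset by blast
  then show "vec_space.rank n ?M \<le> card J" by (rule rank_sum_product_matrices_le)
  define k where "k = card J"
  have pick: "bij_betw (pick J) {..<k} J" unfolding k_def using \<open>finite J\<close> by (rule bij_betw_pick)
  then have pick_J: "pick J s \<in> J" and pick_inj: "t < k \<Longrightarrow> s \<noteq> t \<Longrightarrow> pick J s \<noteq> pick J t"
    if "s < k" for s t
    using that by (auto simp: bij_betw_def inj_on_def)
  define A where "A = mat k k (\<lambda>(s, t). f (pick J s) (pick J t))"
  define B where "B = mat k k (\<lambda>(s, t). g (pick J s) (pick J t))"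
  have "det A \<noteq> 0"
    by (rule det_nonzero_if_weight_triangular[where w = "w \<circ> pick J"])
       (use pick_J pick_inj f_diag f_triangular in \<open>auto simp: A_def\<close>)
  moreover have "det B \<noteq> 0"
    by (rule det_nonzero_if_weight_triangular[where w = "w \<circ> pick J"])
       (use pick_J pick_inj g_diag g_triangular in \<open>auto simp: B_def\<close>)
  moreover have "A \<in> carrier_mat k k" "B \<in> carrier_mat k k" by (simp_all add: A_def B_def)
  ultimately have "det (submatrix ?M J J) \<noteq> 0"
    unfolding submatrix_sum_product_matrices[OF J] A_def[unfolded k_def, symmetric]
      B_def[unfolded k_def, symmetric]
    by (simp add: det_mult[of _ k] det_transpose)
  moreover have "{j. j < n \<and> j \<in> J} = J" using J by auto
  ultimately show "card J \<le> vec_space.rank n ?M"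
    using vec_space.rank_gt_minor[of ?M n n J J] by simp
qed

definition conjugate :: "('a, 'b) monoid_scheme \<Rightarrow> 'a \<Rightarrow> 'a set \<Rightarrow> 'a set" where
  "conjugate G a P = (\<lambda>s. a \<otimes>\<^bsub>G\<^esub> s \<otimes>\<^bsub>G\<^esub> inv\<^bsub>G\<^esub> a) ` P"

context group
begin

lemma G_conjugate_iff:
  "P \<subseteq> carrier G \<Longrightarrow> G_conjugate G P Q \<longleftrightarrow> (\<exists>g\<in>carrier G. Q = conjugate G g P)"
  unfolding G_conjugate_def conjugate_def by (auto simp: l_coset_def r_coset_def image_image)

lemma conjugation_group_hom: "a \<in> carrier G \<Longrightarrow> group_hom G G (\<lambda>x. a \<otimes> x \<otimes> inv a)"
  unfolding group_hom_def group_hom_axioms_def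
  by (auto intro!: homI simp: is_group m_assoc) (simp add: m_assoc[symmetric])

lemma conjugate_subset_carrier: "P \<subseteq> carrier G \<Longrightarrow> a \<in> carrier G \<Longrightarrow> conjugate G a P \<subseteq> carrier G"
  unfolding conjugate_def by auto

lemma card_conjugate: "P \<subseteq> carrier G \<Longrightarrow> a \<in> carrier G \<Longrightarrow> card (conjugate G a P) = card P"
  unfolding conjugate_def
  by (rule card_image) (auto intro!: inj_onI dest: conjugation_is_inj[OF _ subsetD subsetD])

lemma conjugate_conjugate:
  "P \<subseteq> carrier G \<Longrightarrow> a \<in> carrier G \<Longrightarrow> b \<in> carrier G \<Longrightarrow>
    conjugate G b (conjugate G a P) = conjugate G (b \<otimes> a) P"
  unfolding conjugate_def image_image
  by (intro image_cong refl) (auto simp: m_assoc inv_mult_group subsetD)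

lemma conjugate_one: "P \<subseteq> carrier G \<Longrightarrow> conjugate G \<one> P = P"
  unfolding conjugate_def by (auto simp: subsetD image_iff)

lemma conjugate_generate_singleton:
  "z \<in> carrier G \<Longrightarrow> a \<in> carrier G \<Longrightarrow>
    conjugate G a (generate G {z}) = generate G {a \<otimes> z \<otimes> inv a}"
  using group_hom.generate_img[OF conjugation_group_hom, of a "{z}"] unfolding conjugate_def by simp

lemma generate_singleton_subset_iff:
  "subgroup Q G \<Longrightarrow> x \<in> carrier G \<Longrightarrow> generate G {x} \<subseteq> Q \<longleftrightarrow> x \<in> Q"
  using generate_subgroup_incl[of "{x}" Q] generate.incl[of x "{x}" G] by blast

lemma card_Collect_inv_mult:
  assumes a: "a \<in> carrier G"
  shows "card {g \<in> carrier G. \<Phi> (inv g \<otimes> a)} = card {h \<in> carrier G. \<Phi> (inv h)}"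
proof (rule bij_betw_same_card[where f = "\<lambda>g. inv a \<otimes> g"],
       rule bij_betw_byWitness[where f' = "\<lambda>h. a \<otimes> h"])
  show "\<forall>g\<in>{g \<in> carrier G. \<Phi> (inv g \<otimes> a)}. a \<otimes> (inv a \<otimes> g) = g"
    using a by (auto simp: m_assoc[symmetric])
  show "\<forall>h\<in>{h \<in> carrier G. \<Phi> (inv h)}. inv a \<otimes> (a \<otimes> h) = h"
    using a by (auto simp: m_assoc[symmetric])
  show "(\<otimes>) (inv a) ` {g \<in> carrier G. \<Phi> (inv g \<otimes> a)} \<subseteq> {h \<in> carrier G. \<Phi> (inv h)}"
    using a by (auto simp: inv_mult_group)
  show "(\<otimes>) a ` {h \<in> carrier G. \<Phi> (inv h)} \<subseteq> {g \<in> carrier G. \<Phi> (inv g \<otimes> a)}"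
    using a by (auto simp: inv_mult_group m_assoc)
qed

lemma G_conjugate_refl: "P \<subseteq> carrier G \<Longrightarrow> G_conjugate G P P"
  using G_conjugate_iff conjugate_one by blast

lemma G_conjugate_sym:
  assumes P: "P \<subseteq> carrier G" and PQ: "G_conjugate G P Q"
  shows "G_conjugate G Q P"
proof -
  obtain g where g: "g \<in> carrier G" "Q = conjugate G g P" using PQ G_conjugate_iff[OF P] by blast
  then have "Q \<subseteq> carrier G" "P = conjugate G (inv g) Q"
    using P by (simp_all add: conjugate_subset_carrier conjugate_conjugate conjugate_one)
  then show ?thesis using g(1) G_conjugate_iff inv_closed by blast
qed

lemma G_conjugate_trans:
  assumes P: "P \<subseteq> carrier G" and PQ: "G_conjugate G P Q" and QR: "G_conjugate G Q R"
  shows "G_conjugate G P R"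
proof -
  obtain g where g: "g \<in> carrier G" "Q = conjugate G g P" using PQ G_conjugate_iff[OF P] by blast
  then have "Q \<subseteq> carrier G" using P by (simp add: conjugate_subset_carrier)
  then obtain h where h: "h \<in> carrier G" "R = conjugate G h Q" using QR G_conjugate_iff by blast
  then have "R = conjugate G (h \<otimes> g) P" using g P by (simp add: conjugate_conjugate)
  then show ?thesis using g(1) h(1) G_conjugate_iff[OF P] m_closed by blast
qed

end

definition double_coset_action :: "('a, 'b) monoid_scheme \<Rightarrow> 'a \<times> 'a \<Rightarrow> 'a \<Rightarrow> 'a" where
  "double_coset_action G = (\<lambda>(p, q). \<lambda>g\<in>carrier G. p \<otimes>\<^bsub>G\<^esub> g \<otimes>\<^bsub>G\<^esub> inv\<^bsub>G\<^esub> q)"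

context group
begin

lemma group_action_double_coset_action:
  assumes P: "subgroup P G" and Q: "subgroup Q G"
  shows "group_action (G\<lparr>carrier := P\<rparr> \<times>\<times> G\<lparr>carrier := Q\<rparr>) (carrier G) (double_coset_action G)"
proof -
  let ?K = "G\<lparr>carrier := P\<rparr> \<times>\<times> G\<lparr>carrier := Q\<rparr>" and ?\<phi> = "double_coset_action G"
  have PQ: "p \<in> carrier G" "q \<in> carrier G" if "(p, q) \<in> carrier ?K" for p q
    using that subgroup.subset[OF P] subgroup.subset[OF Q] by auto
  have bij: "?\<phi> x \<in> Bij (carrier G)" if xK: "x \<in> carrier ?K" for x
  proof -
    obtain p q where x: "x = (p, q)" "p \<in> carrier G" "q \<in> carrier G" using xK PQ by (cases x) auto
    have "bij_betw (?\<phi> x) (carrier G) (carrier G)"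
      by (rule bij_betw_byWitness[where f' = "\<lambda>g. inv p \<otimes> g \<otimes> q"])
         (use x in \<open>auto simp: double_coset_action_def m_assoc\<close>, simp_all add: m_assoc[symmetric])
    then show ?thesis by (simp add: Bij_def x double_coset_action_def)
  qed
  have "?\<phi> \<in> hom ?K (BijGroup (carrier G))"
  proof (rule homI)
    fix x assume "x \<in> carrier ?K"
    then show "?\<phi> x \<in> carrier (BijGroup (carrier G))" using bij by (simp add: BijGroup_def)
  next
    fix x y assume xy: "x \<in> carrier ?K" "y \<in> carrier ?K"
    obtain p q p' q' where x: "x = (p, q)" and y: "y = (p', q')" by fastforce
    have "?\<phi> x \<otimes>\<^bsub>BijGroup (carrier G)\<^esub> ?\<phi> y = compose (carrier G) (?\<phi> x) (?\<phi> y)"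
      using bij xy by (simp add: BijGroup_def)
    also have "\<dots> = ?\<phi> (x \<otimes>\<^bsub>?K\<^esub> y)"
      unfolding compose_def using PQ xy
      by (intro ext) (auto simp: x y double_coset_action_def m_assoc inv_mult_group)
    finally show "?\<phi> (x \<otimes>\<^bsub>?K\<^esub> y) = ?\<phi> x \<otimes>\<^bsub>BijGroup (carrier G)\<^esub> ?\<phi> y" by simp
  qed
  moreover have "group ?K"
    by (rule DirProd_group[OF subgroup_imp_group[OF P] subgroup_imp_group[OF Q]])
  ultimately show ?thesis
    unfolding group_action_def group_hom_def group_hom_axioms_def using group_BijGroup by blast
qed

lemma orbit_double_coset_action:
  assumes P: "subgroup P G" and Q: "subgroup Q G" and x: "x \<in> carrier G"
  shows "orbit (G\<lparr>carrier := P\<rparr> \<times>\<times> G\<lparr>carrier := Q\<rparr>) (double_coset_action G) x = P <#> (x <# Q)"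
proof -
  have mem: "p \<in> carrier G" "q \<in> carrier G" "inv q \<in> Q" if "p \<in> P" "q \<in> Q" for p q
    using that subgroup.mem_carrier[OF P] subgroup.mem_carrier[OF Q] subgroup.m_inv_closed[OF Q]
    by auto
  have "(\<exists>p\<in>P. \<exists>q\<in>Q. y = p \<otimes> x \<otimes> inv q) \<longleftrightarrow> (\<exists>p\<in>P. \<exists>q\<in>Q. y = p \<otimes> (x \<otimes> q))" for y
  proof
    assume "\<exists>p\<in>P. \<exists>q\<in>Q. y = p \<otimes> x \<otimes> inv q"
    then show "\<exists>p\<in>P. \<exists>q\<in>Q. y = p \<otimes> (x \<otimes> q)" using mem x by (metis m_assoc inv_closed)
  next
    assume "\<exists>p\<in>P. \<exists>q\<in>Q. y = p \<otimes> (x \<otimes> q)"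
    then show "\<exists>p\<in>P. \<exists>q\<in>Q. y = p \<otimes> x \<otimes> inv q" using mem x by (metis m_assoc inv_inv)
  qed
  moreover have "orbit (G\<lparr>carrier := P\<rparr> \<times>\<times> G\<lparr>carrier := Q\<rparr>) (double_coset_action G) x
      = {y. \<exists>p\<in>P. \<exists>q\<in>Q. y = p \<otimes> x \<otimes> inv q}"
    using x by (auto simp: orbit_def double_coset_action_def)
  moreover have "P <#> (x <# Q) = {y. \<exists>p\<in>P. \<exists>q\<in>Q. y = p \<otimes> (x \<otimes> q)}"
    by (auto simp: set_mult_def l_coset_def)
  ultimately show ?thesis by simp
qed

lemma invariants_double_coset_action:
  assumes p: "p \<in> carrier G" and q: "q \<in> carrier G"
  shows "invariants (carrier G) (double_coset_action G) (p, q) = {g \<in> carrier G. inv g \<otimes> p \<otimes> g = q}"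
proof -
  have fixed_iff: "p \<otimes> g \<otimes> inv q = g \<longleftrightarrow> inv g \<otimes> p \<otimes> g = q" if g: "g \<in> carrier G" for g
  proof -
    have "p \<otimes> g \<otimes> inv q = g \<longleftrightarrow> p \<otimes> g = g \<otimes> q" using p q g by (simp add: inv_solve_right')
    also have "\<dots> \<longleftrightarrow> inv g \<otimes> (p \<otimes> g) = q" using p q g by (simp add: inv_solve_left')
    finally show ?thesis using p g by (simp add: m_assoc)
  qed
  have "invariants (carrier G) (double_coset_action G) (p, q) = {g \<in> carrier G. p \<otimes> g \<otimes> inv q = g}"
    unfolding invariants_def double_coset_action_def by auto
  also have "\<dots> = {g \<in> carrier G. inv g \<otimes> p \<otimes> g = q}"
    by (rule Collect_cong) (use fixed_iff in fast)
  finally show ?thesis .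
qed

lemma card_double_cosets_mult:
  assumes fin: "finite (carrier G)" and P: "subgroup P G" and Q: "subgroup Q G"
  shows "card (double_cosets G P Q) * (card P * card Q)
       = (\<Sum>p\<in>P. card {g\<in>carrier G. inv g \<otimes> p \<otimes> g \<in> Q})"
proof -
  let ?K = "G\<lparr>carrier := P\<rparr> \<times>\<times> G\<lparr>carrier := Q\<rparr>" and ?\<phi> = "double_coset_action G"
  interpret action: group_action ?K "carrier G" ?\<phi>
    using group_action_double_coset_action[OF P Q] .
  have PG: "P \<subseteq> carrier G" and QG: "Q \<subseteq> carrier G" using P Q subgroup.subset by auto
  have "finite (carrier ?K)" using finite_subset[OF PG fin] finite_subset[OF QG fin] by simp
  have orbits: "orbits ?K (carrier G) ?\<phi> = double_cosets G P Q"
    unfolding orbits_def double_cosets_def using orbit_double_coset_action[OF P Q] by auto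
  have order: "Coset.order ?K = card P * card Q" by (simp add: Coset.order_def card_cartesian_product)
  have "card (double_cosets G P Q) * (card P * card Q) = card (orbits ?K (carrier G) ?\<phi>) * Coset.order ?K"
    by (simp only: orbits order)
  also have "\<dots> = (\<Sum>k\<in>carrier ?K. card (invariants (carrier G) ?\<phi> k))"
    using action.burnside fin \<open>finite (carrier ?K)\<close> by blast
  also have "\<dots> = (\<Sum>p\<in>P. \<Sum>q\<in>Q. card (invariants (carrier G) ?\<phi> (p, q)))"
    by (simp add: sum.cartesian_product)
  also have "\<dots> = (\<Sum>p\<in>P. \<Sum>q\<in>Q. card {g\<in>carrier G. inv g \<otimes> p \<otimes> g = q})"
    using PG QG by (intro sum.cong refl) (simp add: invariants_double_coset_action subsetD)
  also have "\<dots> = (\<Sum>p\<in>P. card {g\<in>carrier G. inv g \<otimes> p \<otimes> g \<in> Q})"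
  proof (intro sum.cong refl)
    fix p
    have "(\<Sum>q\<in>Q. card {g\<in>carrier G. inv g \<otimes> p \<otimes> g = q})
        = card (\<Union>q\<in>Q. {g\<in>carrier G. inv g \<otimes> p \<otimes> g = q})"
      using fin finite_subset[OF QG fin] by (intro card_UN_disjoint[symmetric]) auto
    also have "(\<Union>q\<in>Q. {g\<in>carrier G. inv g \<otimes> p \<otimes> g = q}) = {g\<in>carrier G. inv g \<otimes> p \<otimes> g \<in> Q}"
      by auto
    finally show "(\<Sum>q\<in>Q. card {g\<in>carrier G. inv g \<otimes> p \<otimes> g = q}) = card {g\<in>carrier G. inv g \<otimes> p \<otimes> g \<in> Q}" .
  qed
  finally show ?thesis .
qed

end

locale subgroup_class_enumeration = group G for G (structure) +
  fixes H :: "'a set" and e :: "nat \<Rightarrow> 'a set set" and n :: nat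
  assumes finite_carrier: "finite (carrier G)" and subgroup_H: "subgroup H G"
    and enum: "bij_betw e {..<n} (conj_classes_of_subgroups G H)"
begin

definition rep :: "nat \<Rightarrow> 'a set" where
  "rep i = class_rep (e i)"

definition cyclic_classes :: "nat set" where
  "cyclic_classes = {i. i < n \<and> (\<exists>P\<in>e i. cyclic_subgroup G P)}"

definition class_index :: "'a \<Rightarrow> nat" where
  "class_index p = (THE c. c < n \<and> generate G {p} \<in> e c)"

definition card_generators_in :: "nat \<Rightarrow> 'a set \<Rightarrow> nat" where
  "card_generators_in c P = card {p \<in> P. generate G {p} \<in> e c}"

definition card_conjugators_into :: "nat \<Rightarrow> 'a set \<Rightarrow> nat" where
  "card_conjugators_into c Q = card {g \<in> carrier G. conjugate G (inv g) (rep c) \<subseteq> Q}"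

lemma subgroups_ofD:
  assumes "W \<in> subgroups_of G H"
  shows "subgroup W G" "W \<subseteq> H" "W \<subseteq> carrier G" "finite W" "card W > 0"
proof -
  show W: "subgroup W G" "W \<subseteq> H" using assms by (auto simp: subgroups_of_def)
  then show "W \<subseteq> carrier G" using subgroup.subset by blast
  then show "finite W" using finite_carrier finite_subset by blast
  then show "card W > 0" using W(1) subgroup.one_closed card_gt_0_iff by blast
qed

lemma enum_eq_conj_class:
  assumes i: "i < n"
  shows "e i = {Q \<in> subgroups_of G H. G_conjugate G (rep i) Q}"
    and "rep i \<in> e i" and "rep i \<in> subgroups_of G H"
proof -
  have "e i \<in> conj_classes_of_subgroups G H" using bij_betw_apply[OF enum] i by simp
  then obtain P where P: "P \<in> subgroups_of G H" "e i = {Q \<in> subgroups_of G H. G_conjugate G P Q}"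
    unfolding conj_classes_of_subgroups_def by blast
  have PG: "P \<subseteq> carrier G" using P(1) subgroups_ofD by blast
  then have "P \<in> e i" using P G_conjugate_refl by auto
  then show rep: "rep i \<in> e i" unfolding rep_def class_rep_def by (rule someI)
  then show "rep i \<in> subgroups_of G H" using P(2) by auto
  have repG: "rep i \<subseteq> carrier G" using rep P(2) subgroups_ofD by blast
  have P_rep: "G_conjugate G P (rep i)" using rep P(2) by auto
  have "G_conjugate G P Q \<longleftrightarrow> G_conjugate G (rep i) Q" for Q
    using G_conjugate_trans[OF PG P_rep] G_conjugate_trans[OF repG G_conjugate_sym[OF PG P_rep]]
    by blast
  then show "e i = {Q \<in> subgroups_of G H. G_conjugate G (rep i) Q}" using P(2) by auto
qed

lemma rep_subgroup: "i < n \<Longrightarrow> subgroup (rep i) G"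
  and rep_subset_carrier: "i < n \<Longrightarrow> rep i \<subseteq> carrier G"
  and finite_rep: "i < n \<Longrightarrow> finite (rep i)"
  and card_rep_pos: "i < n \<Longrightarrow> card (rep i) > 0"
  using subgroups_ofD[OF enum_eq_conj_class(3)] by blast+

lemma class_index_unique:
  assumes i: "i < n" and j: "j < n" and "W \<in> e i" "W \<in> e j"
  shows "i = j"
proof -
  have W: "W \<subseteq> carrier G" "G_conjugate G (rep i) W" "G_conjugate G (rep j) W"
    using assms enum_eq_conj_class subgroups_ofD by blast+
  have ri: "rep i \<subseteq> carrier G" and rj: "rep j \<subseteq> carrier G" using rep_subset_carrier i j by auto
  have ij: "G_conjugate G (rep i) (rep j)"
    using G_conjugate_trans[OF ri W(2) G_conjugate_sym[OF rj W(3)]] .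
  have "G_conjugate G (rep i) Q \<longleftrightarrow> G_conjugate G (rep j) Q" for Q
    using G_conjugate_trans[OF ri ij] G_conjugate_trans[OF rj G_conjugate_sym[OF ri ij]] by blast
  then have "e i = e j" using enum_eq_conj_class(1) i j by simp
  then show ?thesis using enum i j by (simp add: bij_betw_def inj_on_def)
qed

lemma ex_class_index:
  assumes W: "W \<in> subgroups_of G H"
  shows "\<exists>i<n. W \<in> e i"
proof -
  have "{Q \<in> subgroups_of G H. G_conjugate G W Q} \<in> conj_classes_of_subgroups G H"
    unfolding conj_classes_of_subgroups_def using W by (rule imageI)
  then have "{Q \<in> subgroups_of G H. G_conjugate G W Q} \<in> e ` {..<n}"
    using enum by (simp add: bij_betw_def)
  then obtain i where i: "i \<in> {..<n}" "{Q \<in> subgroups_of G H. G_conjugate G W Q} = e i"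
    by (rule imageE)
  have "W \<in> {Q \<in> subgroups_of G H. G_conjugate G W Q}"
    using W G_conjugate_refl[OF subgroups_ofD(3)[OF W]] by simp
  then show ?thesis using i by auto
qed

lemma class_index:
  assumes p: "p \<in> H"
  shows "class_index p < n" "generate G {p} \<in> e (class_index p)"
    and "class_index p \<in> cyclic_classes"
proof -
  have pG: "p \<in> carrier G" using subgroup.mem_carrier[OF subgroup_H p] .
  have "generate G {p} \<in> subgroups_of G H"
    using generate_is_subgroup[of "{p}"] generate_subgroup_incl[of "{p}" H] pG p subgroup_H
    by (simp add: subgroups_of_def)
  then obtain c where "c < n" "generate G {p} \<in> e c" using ex_class_index by blast
  then have "\<exists>!c. c < n \<and> generate G {p} \<in> e c" using class_index_unique by blast
  then have "class_index p < n \<and> generate G {p} \<in> e (class_index p)"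
    unfolding class_index_def by (rule theI')
  then show "class_index p < n" "generate G {p} \<in> e (class_index p)" by simp_all
  then show "class_index p \<in> cyclic_classes"
    unfolding cyclic_classes_def cyclic_subgroup_def using pG by blast
qed

lemma card_conjugates_into_eq:
  assumes c: "c < n" and p: "p \<in> carrier G" and pc: "generate G {p} \<in> e c" and Q: "subgroup Q G"
  shows "card {g \<in> carrier G. inv g \<otimes> p \<otimes> g \<in> Q} = card_conjugators_into c Q"
proof -
  let ?R = "rep c"
  have RG: "?R \<subseteq> carrier G" using rep_subset_carrier c .
  have "G_conjugate G ?R (generate G {p})" using pc enum_eq_conj_class(1)[OF c] by auto
  then obtain a where a: "a \<in> carrier G" "generate G {p} = conjugate G a ?R"
    using G_conjugate_iff RG by blast
  have conj_iff: "inv g \<otimes> p \<otimes> g \<in> Q \<longleftrightarrow> conjugate G (inv g \<otimes> a) ?R \<subseteq> Q"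
    if g: "g \<in> carrier G" for g
  proof -
    have "inv g \<otimes> p \<otimes> g \<in> Q \<longleftrightarrow> generate G {inv g \<otimes> p \<otimes> inv (inv g)} \<subseteq> Q"
      using generate_singleton_subset_iff[OF Q] g p by simp
    also have "\<dots> \<longleftrightarrow> conjugate G (inv g) (generate G {p}) \<subseteq> Q"
      using conjugate_generate_singleton g p by simp
    also have "\<dots> \<longleftrightarrow> conjugate G (inv g \<otimes> a) ?R \<subseteq> Q"
      using a g RG conjugate_conjugate by simp
    finally show ?thesis .
  qed
  have "{g \<in> carrier G. inv g \<otimes> p \<otimes> g \<in> Q} = {g \<in> carrier G. conjugate G (inv g \<otimes> a) ?R \<subseteq> Q}"
  proof (rule Collect_cong)
    show "g \<in> carrier G \<and> inv g \<otimes> p \<otimes> g \<in> Q \<longleftrightarrow> g \<in> carrier G \<and> conjugate G (inv g \<otimes> a) ?R \<subseteq> Q"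
      for g using conj_iff[of g] by blast
  qed
  also have "card \<dots> = card_conjugators_into c Q"
    unfolding card_conjugators_into_def using card_Collect_inv_mult[OF a(1)] .
  finally show ?thesis .
qed

lemma card_double_cosets_rep_mult:
  assumes i: "i < n" and j: "j < n"
  shows "card (double_cosets G (rep i) (rep j)) * (card (rep i) * card (rep j))
       = (\<Sum>c\<in>cyclic_classes. card_generators_in c (rep i) * card_conjugators_into c (rep j))"
proof -
  let ?P = "rep i" and ?Q = "rep j"
  let ?N = "\<lambda>p. card {g \<in> carrier G. inv g \<otimes> p \<otimes> g \<in> ?Q}"
  have PH: "?P \<subseteq> H" using enum_eq_conj_class(3)[OF i] subgroups_ofD by blast
  have "card (double_cosets G ?P ?Q) * (card ?P * card ?Q) = (\<Sum>p\<in>?P. ?N p)"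
    using card_double_cosets_mult[OF finite_carrier rep_subgroup[OF i] rep_subgroup[OF j]] .
  also have "\<dots> = (\<Sum>c\<in>cyclic_classes. \<Sum>p\<in>{p \<in> ?P. class_index p = c}. ?N p)"
    using finite_rep[OF i] class_index(3) PH
    by (intro sum.group[symmetric]) (auto simp: cyclic_classes_def)
  also have "\<dots> = (\<Sum>c\<in>cyclic_classes. card_generators_in c ?P * card_conjugators_into c ?Q)"
  proof (rule sum.cong[OF refl])
    fix c assume "c \<in> cyclic_classes"
    then have c: "c < n" by (simp add: cyclic_classes_def)
    have "{p \<in> ?P. class_index p = c} = {p \<in> ?P. generate G {p} \<in> e c}"
      using class_index class_index_unique c PH by blast
    moreover have "?N p = card_conjugators_into c ?Q" if "p \<in> ?P" "generate G {p} \<in> e c" for p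
      using card_conjugates_into_eq[OF c _ that(2) rep_subgroup[OF j]] that(1) rep_subset_carrier[OF i]
      by blast
    ultimately show "(\<Sum>p\<in>{p \<in> ?P. class_index p = c}. ?N p)
        = card_generators_in c ?P * card_conjugators_into c ?Q"
      unfolding card_generators_in_def by simp
  qed
  finally show ?thesis .
qed

definition generator_ratio :: "nat \<Rightarrow> nat \<Rightarrow> rat" where
  "generator_ratio c i = of_nat (card_generators_in c (rep i)) / of_nat (card (rep i))"

definition conjugator_ratio :: "nat \<Rightarrow> nat \<Rightarrow> rat" where
  "conjugator_ratio c j = of_nat (card_conjugators_into c (rep j)) / of_nat (card (rep j))"

lemma double_coset_matrix_eq:
  "double_coset_matrix G e n
     = mat n n (\<lambda>(i, j). \<Sum>c\<in>cyclic_classes. generator_ratio c i * conjugator_ratio c j)"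
proof (rule eq_matI)
  fix i j assume "i < dim_row (mat n n (\<lambda>(i, j). \<Sum>c\<in>cyclic_classes. generator_ratio c i * conjugator_ratio c j))"
    "j < dim_col (mat n n (\<lambda>(i, j). \<Sum>c\<in>cyclic_classes. generator_ratio c i * conjugator_ratio c j))"
  then have i: "i < n" and j: "j < n" by auto
  let ?a = "card (rep i)" and ?b = "card (rep j)"
  have "?a > 0" "?b > 0" using card_rep_pos i j by auto
  moreover have "of_nat (card (double_cosets G (rep i) (rep j))) * (of_nat ?a * of_nat ?b)
      = (\<Sum>c\<in>cyclic_classes. of_nat (card_generators_in c (rep i)) * of_nat (card_conjugators_into c (rep j)) :: rat)"
    using arg_cong[OF card_double_cosets_rep_mult[OF i j], of "of_nat :: nat \<Rightarrow> rat"] by simp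
  ultimately have "(of_nat (card (double_cosets G (rep i) (rep j))) :: rat)
      = (\<Sum>c\<in>cyclic_classes. generator_ratio c i * conjugator_ratio c j)"
    by (simp add: generator_ratio_def conjugator_ratio_def sum_divide_distrib[symmetric] field_simps)
  then show "double_coset_matrix G e n $$ (i, j)
      = mat n n (\<lambda>(i, j). \<Sum>c\<in>cyclic_classes. generator_ratio c i * conjugator_ratio c j) $$ (i, j)"
    using i j by (simp add: double_coset_matrix_def rep_def)
qed (simp_all add: double_coset_matrix_def)

lemma card_rep_less:
  assumes c: "c < n" and d: "d < n" and "c \<noteq> d"
    and W: "G_conjugate G (rep c) W" "W \<subseteq> rep d"
  shows "card (rep c) < card (rep d)"
proof -
  obtain a where "a \<in> carrier G" "W = conjugate G a (rep c)"
    using W(1) G_conjugate_iff[OF rep_subset_carrier[OF c]] by blast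
  then have card_W: "card W = card (rep c)" using card_conjugate[OF rep_subset_carrier[OF c]] by simp
  have "W \<noteq> rep d"
  proof
    assume "W = rep d"
    then have "rep d \<in> e c"
      using W(1) enum_eq_conj_class(3)[OF d] unfolding enum_eq_conj_class(1)[OF c] by simp
    then show False using class_index_unique[OF c d _ enum_eq_conj_class(2)[OF d]] \<open>c \<noteq> d\<close> by blast
  qed
  then have "W \<subset> rep d" using W(2) by blast
  then show ?thesis using psubset_card_mono[OF finite_rep[OF d]] card_W by metis
qed

lemma generator_ratio_triangular:
  assumes c: "c < n" and d: "d < n" and "c \<noteq> d" and "generator_ratio c d \<noteq> 0"
  shows "card (rep c) < card (rep d)"
proof -
  have "card_generators_in c (rep d) \<noteq> 0" using assms(4) by (auto simp: generator_ratio_def)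
  then have "{p \<in> rep d. generate G {p} \<in> e c} \<noteq> {}"
    unfolding card_generators_in_def by (metis card.empty)
  then obtain p where p: "p \<in> rep d" "generate G {p} \<in> e c" by blast
  have "generate G {p} \<subseteq> rep d"
    using generate_singleton_subset_iff[OF rep_subgroup[OF d]] p(1) rep_subset_carrier[OF d] by auto
  moreover have "G_conjugate G (rep c) (generate G {p})" using p(2) enum_eq_conj_class(1)[OF c] by auto
  ultimately show ?thesis using card_rep_less[OF c d \<open>c \<noteq> d\<close>] by blast
qed

lemma conjugator_ratio_triangular:
  assumes c: "c < n" and d: "d < n" and "c \<noteq> d" and "conjugator_ratio c d \<noteq> 0"
  shows "card (rep c) < card (rep d)"
proof -
  have "card_conjugators_into c (rep d) \<noteq> 0" using assms(4) by (auto simp: conjugator_ratio_def)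
  then have "{g \<in> carrier G. conjugate G (inv g) (rep c) \<subseteq> rep d} \<noteq> {}"
    unfolding card_conjugators_into_def by (metis card.empty)
  then obtain g where g: "g \<in> carrier G" "conjugate G (inv g) (rep c) \<subseteq> rep d" by blast
  moreover have "G_conjugate G (rep c) (conjugate G (inv g) (rep c))"
    unfolding G_conjugate_iff[OF rep_subset_carrier[OF c]] using g(1) by blast
  ultimately show ?thesis using card_rep_less[OF c d \<open>c \<noteq> d\<close>] by blast
qed

lemma generator_ratio_diag:
  assumes "c \<in> cyclic_classes"
  shows "generator_ratio c c \<noteq> 0"
proof -
  have c: "c < n" using assms by (simp add: cyclic_classes_def)
  obtain z where z: "z \<in> carrier G" "generate G {z} \<in> e c"
    using assms unfolding cyclic_classes_def cyclic_subgroup_def by blast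
  have "generate G {z} \<subseteq> carrier G" using generate_incl z(1) by simp
  moreover have "G_conjugate G (rep c) (generate G {z})" using z(2) enum_eq_conj_class(1)[OF c] by auto
  then have "G_conjugate G (generate G {z}) (rep c)" by (rule G_conjugate_sym[OF rep_subset_carrier[OF c]])
  ultimately obtain a where a: "a \<in> carrier G" "rep c = conjugate G a (generate G {z})"
    using G_conjugate_iff by blast
  let ?p = "a \<otimes> z \<otimes> inv a"
  have "rep c = generate G {?p}" using a z conjugate_generate_singleton by simp
  then have "?p \<in> {p \<in> rep c. generate G {p} \<in> e c}"
    using generate.incl[of ?p "{?p}" G] enum_eq_conj_class(2)[OF c] by auto
  then have "card_generators_in c (rep c) \<noteq> 0"
    unfolding card_generators_in_def using finite_rep[OF c] by auto
  then show ?thesis using card_rep_pos[OF c] by (simp add: generator_ratio_def)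
qed

lemma conjugator_ratio_diag:
  assumes c: "c < n"
  shows "conjugator_ratio c c \<noteq> 0"
proof -
  have "conjugate G (inv \<one>) (rep c) \<subseteq> rep c"
    using conjugate_one[OF rep_subset_carrier[OF c]] by simp
  then have "{g \<in> carrier G. conjugate G (inv g) (rep c) \<subseteq> rep c} \<noteq> {}" by blast
  then have "card_conjugators_into c (rep c) \<noteq> 0"
    unfolding card_conjugators_into_def using finite_carrier by simp
  then show ?thesis using card_rep_pos[OF c] by (simp add: conjugator_ratio_def)
qed

lemma card_cyclic_classes: "card cyclic_classes = card (conj_classes_of_cyclic_subgroups G H)"
proof -
  have "e ` cyclic_classes = conj_classes_of_cyclic_subgroups G H"
  proof
    show "e ` cyclic_classes \<subseteq> conj_classes_of_cyclic_subgroups G H"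
      using enum unfolding cyclic_classes_def conj_classes_of_cyclic_subgroups_def bij_betw_def by auto
  next
    show "conj_classes_of_cyclic_subgroups G H \<subseteq> e ` cyclic_classes"
    proof
      fix C assume C: "C \<in> conj_classes_of_cyclic_subgroups G H"
      then obtain i where "i < n" "C = e i"
        using enum unfolding conj_classes_of_cyclic_subgroups_def bij_betw_def by auto
      then show "C \<in> e ` cyclic_classes"
        using C unfolding cyclic_classes_def conj_classes_of_cyclic_subgroups_def by auto
    qed
  qed
  moreover have "inj_on e cyclic_classes"
    using enum unfolding bij_betw_def cyclic_classes_def by (auto intro: inj_on_subset)
  ultimately show ?thesis using card_image by fastforce
qed

theorem rank_double_coset_matrix:
  "vec_space.rank n (double_coset_matrix G e n) = card (conj_classes_of_cyclic_subgroups G H)"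
  unfolding double_coset_matrix_eq card_cyclic_classes[symmetric]
proof (rule rank_sum_weight_triangular_products[where w = "\<lambda>c. card (rep c)"])
  show J: "cyclic_classes \<subseteq> {..<n}" by (auto simp: cyclic_classes_def)
  show "generator_ratio c c \<noteq> 0" if "c \<in> cyclic_classes" for c
    using that by (rule generator_ratio_diag)
  show "conjugator_ratio c c \<noteq> 0" if "c \<in> cyclic_classes" for c
    using that J by (intro conjugator_ratio_diag) auto
  show "card (rep c) < card (rep d)"
    if "c \<in> cyclic_classes" "d \<in> cyclic_classes" "c \<noteq> d" "generator_ratio c d \<noteq> 0" for c d
    using that J by (intro generator_ratio_triangular) auto
  show "card (rep c) < card (rep d)"
    if "c \<in> cyclic_classes" "d \<in> cyclic_classes" "c \<noteq> d" "conjugator_ratio c d \<noteq> 0" for c d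
    using that J by (intro conjugator_ratio_triangular) auto
qed

end

theorem theorem1p1:
  fixes G (structure) and H :: "'a set" and e :: "nat \<Rightarrow> 'a set set" and n :: nat
  assumes "group G" and "finite (carrier G)" and "subgroup H G"
    and "bij_betw e {..<n} (conj_classes_of_subgroups G H)"
  shows "vec_space.rank n (double_coset_matrix G e n)
           = card (conj_classes_of_cyclic_subgroups G H)"
proof -
  interpret subgroup_class_enumeration G H e n
    using assms by (simp add: subgroup_class_enumeration_def subgroup_class_enumeration_axioms_def)
  show ?thesis by (rule rank_double_coset_matrix)
qed

end
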